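(* There exists a constant $c<1$ such that, for all sufficiently large $n$, the number of $\hbar$-perfect graphs on the labelled vertex set $\{1,\dots,n\}$ is at most $2^{c\,n(n-1)/2}$.
   Context: A realization of a graph $G$ on $\{1,\dots,n\}$ is a tuple $(S_1,\dots,S_n)$ of Pauli strings (tensor products of matrices from $\{I,X,Y,Z\}$) of common length with $S_i,S_j$ anticommuting iff $i\sim j$ and commuting otherwise; every graph has one. For $w\in\mathbb{R}^n_{\ge0}$, $\beta(G,w)=\sup_\rho\sum_iw_i\operatorname{tr}(\rho S_i)^2$ over density matrices (independent of realization), $\alpha(G,w)=\max\{\sum_{i\in I}w_i:I\text{ independent}\}$, and $G$ is $\hbar$-perfect if $\beta(G,w)=\alpha(G,w)$ for all $w\ge0$. (It is known that the complement of the 7-cycle is not $\hbar$-perfect.) *)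

theory Defs
  imports Complex_Main "Jordan_Normal_Form.Matrix"
begin

datatype pauli = PI | PX | PY | PZ

fun pauli_entry :: "pauli \<Rightarrow> nat \<Rightarrow> nat \<Rightarrow> complex" where
  "pauli_entry PI r c = (if r = c then 1 else 0)"
| "pauli_entry PX r c = (if r = c then 0 else 1)"
| "pauli_entry PY r c = (if r = c then 0 else if r = 0 then - \<i> else \<i>)"
| "pauli_entry PZ r c = (if r = c then (if r = 0 then 1 else -1) else 0)"

text \<open>The matrix of a Pauli string (tensor product of its factors), of size 2^m,
  where the k-th tensor factor acts on bit k of the row/column index.\<close>
definition pauli_mat :: "pauli list \<Rightarrow> complex mat" where
  "pauli_mat ps = mat (2 ^ length ps) (2 ^ length ps)
     (\<lambda>(r, c). \<Prod>k<length ps. pauli_entry (ps ! k) (r div 2 ^ k mod 2) (c div 2 ^ k mod 2))"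

section \<open>Graphs on {0..<n} (standing for the labelled vertex set {1,...,n})\<close>

definition all_pairs :: "nat \<Rightarrow> nat set set" where
  "all_pairs n = {{i, j} | i j. i < n \<and> j < n \<and> i \<noteq> j}"

definition is_graph :: "nat \<Rightarrow> nat set set \<Rightarrow> bool" where
  "is_graph n E \<longleftrightarrow> E \<subseteq> all_pairs n"

definition realization :: "nat \<Rightarrow> nat set set \<Rightarrow> nat \<Rightarrow> (nat \<Rightarrow> pauli list) \<Rightarrow> bool" where
  "realization n E m S \<longleftrightarrow>
     (\<forall>i<n. length (S i) = m) \<and>
     (\<forall>i<n. \<forall>j<n.
        (if {i, j} \<in> E
         then pauli_mat (S i) * pauli_mat (S j) = - (pauli_mat (S j) * pauli_mat (S i))
         else pauli_mat (S i) * pauli_mat (S j) = pauli_mat (S j) * pauli_mat (S i)))"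

definition mat_trace :: "complex mat \<Rightarrow> complex" where
  "mat_trace A = (\<Sum>i<dim_row A. A $$ (i, i))"

definition conj_transpose :: "complex mat \<Rightarrow> complex mat" where
  "conj_transpose A = mat (dim_col A) (dim_row A) (\<lambda>(i, j). cnj (A $$ (j, i)))"

definition density_mat :: "nat \<Rightarrow> complex mat \<Rightarrow> bool" where
  "density_mat d \<rho> \<longleftrightarrow>
     \<rho> \<in> carrier_mat d d \<and> conj_transpose \<rho> = \<rho> \<and>
     (\<forall>v \<in> carrier_vec d. 0 \<le> Re ((\<rho> *\<^sub>v v) \<bullet>c v)) \<and>
     mat_trace \<rho> = 1"

text \<open>beta(G,w) computed from a realization S of length m.  tr(rho S_i) is real
  (both Hermitian), so we take its real part.\<close>
definition beta_real :: "nat \<Rightarrow> nat \<Rightarrow> (nat \<Rightarrow> pauli list) \<Rightarrow> (nat \<Rightarrow> real) \<Rightarrow> real" where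
  "beta_real n m S w =
     Sup ((\<lambda>\<rho>. \<Sum>i<n. w i * (Re (mat_trace (\<rho> * pauli_mat (S i))))\<^sup>2)
          ` {\<rho>. density_mat (2 ^ m) \<rho>})"

definition independent :: "nat \<Rightarrow> nat set set \<Rightarrow> nat set \<Rightarrow> bool" where
  "independent n E I \<longleftrightarrow> I \<subseteq> {..<n} \<and> (\<forall>i\<in>I. \<forall>j\<in>I. {i, j} \<notin> E)"

definition alpha :: "nat \<Rightarrow> nat set set \<Rightarrow> (nat \<Rightarrow> real) \<Rightarrow> real" where
  "alpha n E w = Max ((\<lambda>I. \<Sum>i\<in>I. w i) ` {I. independent n E I})"

text \<open>hbar-perfect: beta = alpha for all nonnegative weights. Since beta does not
  depend on the realization (and realizations exist), we require it for every realization.\<close>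
definition hbar_perfect :: "nat \<Rightarrow> nat set set \<Rightarrow> bool" where
  "hbar_perfect n E \<longleftrightarrow>
     (\<forall>m S w. realization n E m S \<longrightarrow> (\<forall>i<n. 0 \<le> w i) \<longrightarrow>
        beta_real n m S w = alpha n E w)"

end

theory Submission
  imports Defs
begin

(* The complement of the 7-cycle (the 7-antihole) is realized by seven 3-qubit Pauli strings,
   and the pure state with amplitudes (-1, 2, 5, -2, 2, -1, -2, -1) / sqrt 44 has expectation
   +-6/11 on each of them. For the indicator weight of the antihole this gives
   beta >= 7 * 36/121 > 2 = alpha. The same state works in any graph with an induced antihole:
   every other edge gets a qubit of its own, on which the strings of the antihole vertices are
   I or Z, so the expectations do not change.

   Hence an hbar-perfect graph on n >= 49 p vertices avoids the antihole pattern on each of the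
   p^2 lines {(a + b t, t) | t < 7} of a 7p x 7 grid of vertices. Two lines share at most one
   vertex, so the vertex pairs of different lines are disjoint, the p^2 constraints on 21 pairs
   each are independent, and there are at most (1 - 2^-21)^(p^2) * 2^(n choose 2) such graphs. *)

section \<open>Commutation of Pauli strings\<close>

lemma sum_pow2_prod_digits:
  "(\<Sum>(l::nat)<2^m. \<Prod>k<m. f k (l div 2^k mod 2)) = (\<Prod>k<m. \<Sum>z<2. f k z :: 'a::comm_semiring_1)"
proof (induction m arbitrary: f)
  case 0
  then show ?case by simp
next
  case (Suc m)
  have split_digit: "(\<Prod>k<Suc m. f k (l div 2^k mod 2))
      = f 0 (l mod 2) * (\<Prod>k<m. f (Suc k) (l div 2 div 2^k mod 2))" for l
    unfolding prod.lessThan_Suc_shift by (simp add: div_mult2_eq del: prod.lessThan_Suc)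
  have pair: "(\<Sum>l\<in>{q*2..<q*2+2}. f 0 (l mod 2) * g (l div 2)) = (f 0 0 + f 0 1) * g q"
    for q and g :: "nat \<Rightarrow> 'a"
  proof -
    have "{q*2..<q*2+2} = {q*2, q*2+1}" by auto
    moreover have "(q*2+1) mod 2 = 1" by presburger
    ultimately show ?thesis by (simp add: algebra_simps)
  qed
  have "(\<Sum>l<2^Suc m. \<Prod>k<Suc m. f k (l div 2^k mod 2))
      = (\<Sum>q<2^m. \<Sum>l\<in>{q*2..<q*2+2}. f 0 (l mod 2) * (\<Prod>k<m. f (Suc k) (l div 2 div 2^k mod 2)))"
    unfolding split_digit power_Suc2 by (rule sum.nat_group[symmetric])
  also have "\<dots> = (\<Sum>q<2^m. (f 0 0 + f 0 1) * (\<Prod>k<m. f (Suc k) (q div 2^k mod 2)))"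
    by (intro sum.cong refl pair)
  also have "\<dots> = (f 0 0 + f 0 1) * (\<Sum>q<2^m. \<Prod>k<m. f (Suc k) (q div 2^k mod 2))"
    by (simp add: sum_distrib_left)
  also have "\<dots> = (\<Prod>k<Suc m. \<Sum>z<2. f k z)"
    unfolding Suc.IH[of "\<lambda>k. f (Suc k)"] prod.lessThan_Suc_shift[of "\<lambda>k. sum (f k) {..<2}"]
    by (simp add: numeral_2_eq_2)
  finally show ?case .
qed

definition pauli_prod_entry :: "pauli \<Rightarrow> pauli \<Rightarrow> nat \<Rightarrow> nat \<Rightarrow> complex" where
  "pauli_prod_entry a b x y = (\<Sum>z<2. pauli_entry a x z * pauli_entry b z y)"

definition pauli_sign :: "pauli \<Rightarrow> pauli \<Rightarrow> complex" where
  "pauli_sign a b = (if a \<noteq> PI \<and> b \<noteq> PI \<and> a \<noteq> b then -1 else 1)"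

definition pauli_string_sign :: "pauli list \<Rightarrow> pauli list \<Rightarrow> complex" where
  "pauli_string_sign ps qs = (\<Prod>k<length ps. pauli_sign (ps ! k) (qs ! k))"

lemma pauli_mat_carrier [simp]:
  "pauli_mat ps \<in> carrier_mat (2 ^ length ps) (2 ^ length ps)"
  "dim_row (pauli_mat ps) = 2 ^ length ps" "dim_col (pauli_mat ps) = 2 ^ length ps"
  by (auto simp: pauli_mat_def)

lemma pauli_mat_index:
  "r < 2 ^ length ps \<Longrightarrow> c < 2 ^ length ps \<Longrightarrow> pauli_mat ps $$ (r, c) =
    (\<Prod>k<length ps. pauli_entry (ps ! k) (r div 2 ^ k mod 2) (c div 2 ^ k mod 2))"
  by (simp add: pauli_mat_def)

lemma pauli_mat_mult:
  assumes "length qs = length ps"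
  shows "pauli_mat ps * pauli_mat qs = mat (2 ^ length ps) (2 ^ length ps)
     (\<lambda>(r, c). \<Prod>k<length ps. pauli_prod_entry (ps ! k) (qs ! k) (r div 2 ^ k mod 2) (c div 2 ^ k mod 2))"
    (is "_ = ?R")
proof (rule eq_matI)
  fix r c assume "r < dim_row ?R" "c < dim_col ?R"
  then have r: "r < 2 ^ length ps" and c: "c < 2 ^ length ps" by simp_all
  have "(pauli_mat ps * pauli_mat qs) $$ (r, c)
      = (\<Sum>l<2 ^ length ps. pauli_mat ps $$ (r, l) * pauli_mat qs $$ (l, c))"
    using r c assms by (simp add: scalar_prod_def lessThan_atLeast0)
  also have "\<dots> = (\<Sum>l<2 ^ length ps. \<Prod>k<length ps.
      pauli_entry (ps ! k) (r div 2 ^ k mod 2) (l div 2 ^ k mod 2) *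
      pauli_entry (qs ! k) (l div 2 ^ k mod 2) (c div 2 ^ k mod 2))"
    using r c assms by (simp add: pauli_mat_index prod.distrib)
  also have "\<dots> = ?R $$ (r, c)"
    using r c by (subst sum_pow2_prod_digits) (simp add: pauli_prod_entry_def)
  finally show "(pauli_mat ps * pauli_mat qs) $$ (r, c) = ?R $$ (r, c)" .
qed (use assms in auto)

lemma less_2_cases: "(x::nat) < 2 \<Longrightarrow> x = 0 \<or> x = 1"
  by auto

lemma pauli_prod_entry_swap:
  assumes "x < 2" "y < 2"
  shows "pauli_prod_entry a b x y = pauli_sign a b * pauli_prod_entry b a x y"
  using less_2_cases[OF assms(1)] less_2_cases[OF assms(2)]
  by (cases a; cases b) (auto simp: pauli_prod_entry_def pauli_sign_def numeral_2_eq_2 lessThan_Suc)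

lemma pauli_prod_entry_self:
  assumes "x < 2" "y < 2"
  shows "pauli_prod_entry a a x y = (if x = y then 1 else 0)"
  using less_2_cases[OF assms(1)] less_2_cases[OF assms(2)]
  by (cases a) (auto simp: pauli_prod_entry_def numeral_2_eq_2 lessThan_Suc)

lemma pauli_mat_mult_swap:
  assumes "length qs = length ps"
  shows "pauli_mat ps * pauli_mat qs = pauli_string_sign ps qs \<cdot>\<^sub>m (pauli_mat qs * pauli_mat ps)"
proof -
  have "(\<Prod>k<length ps. pauli_prod_entry (ps ! k) (qs ! k) (r div 2 ^ k mod 2) (c div 2 ^ k mod 2)) =
      pauli_string_sign ps qs *
      (\<Prod>k<length ps. pauli_prod_entry (qs ! k) (ps ! k) (r div 2 ^ k mod 2) (c div 2 ^ k mod 2))"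
    for r c
    unfolding pauli_string_sign_def prod.distrib[symmetric]
    by (intro prod.cong refl pauli_prod_entry_swap) simp_all
  moreover have "pauli_mat qs * pauli_mat ps = mat (2 ^ length ps) (2 ^ length ps)
     (\<lambda>(r, c). \<Prod>k<length ps. pauli_prod_entry (qs ! k) (ps ! k) (r div 2 ^ k mod 2) (c div 2 ^ k mod 2))"
    using pauli_mat_mult[of ps qs] assms by simp
  ultimately show ?thesis
    unfolding pauli_mat_mult[OF assms]
    by (intro eq_matI) (simp_all only: index_smult_mat index_mat dim_row_mat dim_col_mat split)
qed

lemma nat_eq_if_low_bits_eq:
  assumes "(r::nat) < 2 ^ m" "c < 2 ^ m" "\<forall>k<m. r div 2 ^ k mod 2 = c div 2 ^ k mod 2"
  shows "r = c"
proof (rule bit_eqI)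
  fix k
  show "bit r k = bit c k"
  proof (cases "k < m")
    case True
    then show ?thesis using assms(3) by (auto simp: bit_iff_odd odd_iff_mod_2_eq_one)
  next
    case False
    then have "(2::nat) ^ m \<le> 2 ^ k" by (simp add: power_increasing)
    then have "r div 2 ^ k = 0" "c div 2 ^ k = 0" using assms(1,2) by (meson div_less order_less_le_trans)+
    then show ?thesis by (simp add: bit_iff_odd)
  qed
qed

lemma pauli_mat_square: "pauli_mat ps * pauli_mat ps = 1\<^sub>m (2 ^ length ps)"
proof -
  have "(\<Prod>k<length ps. pauli_prod_entry (ps ! k) (ps ! k) (r div 2 ^ k mod 2) (c div 2 ^ k mod 2))
      = (if r = c then 1 else 0)"
    if rc: "r < 2 ^ length ps" "c < 2 ^ length ps" for r c
  proof (cases "r = c")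
    case True
    then show ?thesis by (simp add: pauli_prod_entry_self)
  next
    case False
    then obtain k where "k < length ps" "r div 2 ^ k mod 2 \<noteq> c div 2 ^ k mod 2"
      using nat_eq_if_low_bits_eq[OF rc] by blast
    then show ?thesis
      using False by (intro trans[OF prod_zero]) (auto simp: pauli_prod_entry_self intro!: bexI[of _ k])
  qed
  then show ?thesis
    unfolding pauli_mat_mult[OF refl]
    by (intro eq_matI) (simp_all only: index_one_mat index_mat dim_row_mat dim_col_mat split)
qed

lemma pauli_string_sign_cases: "pauli_string_sign ps qs = 1 \<or> pauli_string_sign ps qs = -1"
proof -
  have "(\<Prod>k\<in>K. pauli_sign (ps ! k) (qs ! k)) \<in> {1, -1}" for K :: "nat set"
    by (induction K rule: infinite_finite_induct) (auto simp: pauli_sign_def)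
  then show ?thesis by (simp add: pauli_string_sign_def)
qed

lemma pauli_mat_mult_neq_uminus:
  assumes "length qs = length ps"
  shows "pauli_mat ps * pauli_mat qs \<noteq> - (pauli_mat ps * pauli_mat qs)"
proof
  let ?d = "2 ^ length ps" and ?P = "pauli_mat ps" and ?Q = "pauli_mat qs"
  have P: "?P \<in> carrier_mat ?d ?d" and Q: "?Q \<in> carrier_mat ?d ?d"
    using assms pauli_mat_carrier(1)[of qs] by simp_all
  assume eq: "?P * ?Q = - (?P * ?Q)"
  have "?P * ?Q = 0\<^sub>m ?d ?d"
  proof (rule eq_matI)
    fix i j assume ij: "i < dim_row (0\<^sub>m ?d ?d :: complex mat)" "j < dim_col (0\<^sub>m ?d ?d :: complex mat)"
    have "(- (?P * ?Q)) $$ (i, j) = - ((?P * ?Q) $$ (i, j))"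
      using assms ij by (intro index_uminus_mat) simp_all
    then show "(?P * ?Q) $$ (i, j) = 0\<^sub>m ?d ?d $$ (i, j)"
      using ij arg_cong[OF eq, of "\<lambda>M. M $$ (i, j)"] by simp
  qed (use assms in simp_all)
  moreover have "(?P * ?Q) * (?Q * ?P) = 1\<^sub>m ?d"
  proof -
    have "(?P * ?Q) * (?Q * ?P) = ?P * ((?Q * ?Q) * ?P)"
      using P Q by (simp add: assoc_mult_mat[of _ ?d ?d _ ?d _ ?d])
    also have "\<dots> = 1\<^sub>m ?d"
      using P assms by (simp add: pauli_mat_square)
    finally show ?thesis .
  qed
  ultimately have "(1\<^sub>m ?d :: complex mat) = 0\<^sub>m ?d ?d"
    using left_mult_zero_mat[OF mult_carrier_mat[OF Q P]] by simp
  then show False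
    by (metis index_one_mat(1) index_zero_mat(1) one_neq_zero pos2 zero_less_power)
qed

lemma pauli_mat_commute_iff:
  assumes "length qs = length ps"
  shows "pauli_mat ps * pauli_mat qs = pauli_mat qs * pauli_mat ps \<longleftrightarrow> pauli_string_sign ps qs = 1"
    and "pauli_mat ps * pauli_mat qs = - (pauli_mat qs * pauli_mat ps) \<longleftrightarrow> pauli_string_sign ps qs = -1"
proof -
  let ?M = "pauli_mat qs * pauli_mat ps"
  have M: "?M \<in> carrier_mat (2 ^ length ps) (2 ^ length ps)"
    using assms by (metis mult_carrier_mat pauli_mat_carrier(1))
  have "?M \<noteq> - ?M"
    using pauli_mat_mult_neq_uminus[of ps qs] assms by simp
  moreover have "1 \<cdot>\<^sub>m ?M = ?M" "(-1) \<cdot>\<^sub>m ?M = - ?M"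
    using M by auto
  ultimately show "pauli_mat ps * pauli_mat qs = ?M \<longleftrightarrow> pauli_string_sign ps qs = 1"
    and "pauli_mat ps * pauli_mat qs = - ?M \<longleftrightarrow> pauli_string_sign ps qs = -1"
    using pauli_mat_mult_swap[OF assms] pauli_string_sign_cases[of ps qs] by auto
qed

lemma realization_iff_pauli_string_sign:
  "realization n E m S \<longleftrightarrow> (\<forall>i<n. length (S i) = m) \<and>
     (\<forall>i<n. \<forall>j<n. pauli_string_sign (S i) (S j) = (if {i, j} \<in> E then -1 else 1))"
  unfolding realization_def
  by (auto simp: pauli_mat_commute_iff split: if_splits)

lemma prod_lessThan_add:
  "(\<Prod>(k::nat)<a + b. f k) = (\<Prod>k<a. f k) * (\<Prod>k<b. f (a + k) :: 'a::comm_monoid_mult)"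
  by (induction b) (simp_all add: mult.assoc)

lemma pauli_string_sign_append:
  assumes "length qs = length ps"
  shows "pauli_string_sign (ps @ ps') (qs @ qs') = pauli_string_sign ps qs * pauli_string_sign ps' qs'"
  using assms by (simp add: pauli_string_sign_def prod_lessThan_add nth_append)

lemma pauli_string_sign_map:
  "pauli_string_sign (map f [0..<N]) (map g [0..<N]) = (\<Prod>q<N. pauli_sign (f q) (g q))"
  by (simp add: pauli_string_sign_def)

lemma pauli_mat_append_index:
  assumes "set qs \<subseteq> {PI, PZ}" "r < 2 ^ length ps" "c < 2 ^ length ps"
  shows "pauli_mat (ps @ qs) $$ (r, c) = pauli_mat ps $$ (r, c)"
proof -
  have high: "x div 2 ^ (length ps + k) = 0" if "x < 2 ^ length ps" for x k :: nat
    using that by (simp add: div_less order_less_le_trans power_increasing)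
  have "pauli_entry (qs ! k) 0 0 = 1" if "k < length qs" for k
    using assms(1) nth_mem[OF that] by auto
  then have "(\<Prod>k<length qs. pauli_entry (qs ! k) (r div 2 ^ (length ps + k) mod 2)
      (c div 2 ^ (length ps + k) mod 2)) = 1"
    using assms(2,3) by (simp add: high)
  moreover have "r < 2 ^ length (ps @ qs)" "c < 2 ^ length (ps @ qs)"
    using assms(2,3) by (simp_all add: order_less_le_trans power_increasing)
  ultimately show ?thesis
    using assms(2,3) by (simp add: pauli_mat_index prod_lessThan_add nth_append)
qed

section \<open>The 7-antihole\<close>

definition antihole_adj :: "nat \<Rightarrow> nat \<Rightarrow> bool" where
  "antihole_adj t s \<longleftrightarrow> (t + 7 - s) mod 7 \<in> {2, 3, 4, 5}"

definition antihole_string :: "nat \<Rightarrow> pauli list" where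
  "antihole_string t = [[PI, PI, PX], [PI, PX, PI], [PX, PX, PZ], [PZ, PZ, PZ],
     [PI, PZ, PZ], [PX, PZ, PZ], [PZ, PZ, PX]] ! t"

definition antihole_state :: "nat \<Rightarrow> real" where
  "antihole_state r = (if r < 8 then [-1, 2, 5, -2, 2, -1, -2, -1] ! r else 0)"

lemma less_7_cases: "(t::nat) < 7 \<Longrightarrow> t = 0 \<or> t = 1 \<or> t = 2 \<or> t = 3 \<or> t = 4 \<or> t = 5 \<or> t = 6"
  by auto

lemma antihole_adj_sym: "t < 7 \<Longrightarrow> s < 7 \<Longrightarrow> antihole_adj t s \<longleftrightarrow> antihole_adj s t"
  by (auto dest!: less_7_cases simp: antihole_adj_def)

lemma antihole_no_independent_triple:
  assumes "t1 < 7" "t2 < 7" "t3 < 7" "t1 \<noteq> t2" "t1 \<noteq> t3" "t2 \<noteq> t3"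
  shows "antihole_adj t1 t2 \<or> antihole_adj t1 t3 \<or> antihole_adj t2 t3"
  using less_7_cases[OF assms(1)] less_7_cases[OF assms(2)] less_7_cases[OF assms(3)] assms(4-)
  by (elim disjE) (simp_all add: antihole_adj_def)

lemma length_antihole_string: "t < 7 \<Longrightarrow> length (antihole_string t) = 3"
  by (auto dest!: less_7_cases simp: antihole_string_def)

lemma prod_lessThan_3: "(\<Prod>(k::nat)<3. g k) = g 0 * g 1 * (g 2 :: 'a::comm_monoid_mult)"
  by (simp add: numeral_3_eq_3 numeral_2_eq_2 lessThan_Suc mult_ac)

lemma sum_lessThan_8:
  "(\<Sum>(k::nat)<8. g k) = g 0 + g 1 + g 2 + g 3 + g 4 + g 5 + g 6 + (g 7 :: 'a::comm_monoid_add)"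
  by (simp add: numeral_eq_Suc lessThan_Suc add_ac)

lemma pauli_string_sign_antihole_string:
  assumes "t < 7" "s < 7"
  shows "pauli_string_sign (antihole_string t) (antihole_string s) = (if antihole_adj t s then -1 else 1)"
  using less_7_cases[OF assms(1)] less_7_cases[OF assms(2)]
  by (elim disjE) (simp_all add: pauli_string_sign_def antihole_string_def prod_lessThan_3
      pauli_sign_def antihole_adj_def)

lemma antihole_state_expectation:
  assumes "t < 7"
  shows "(\<Sum>r<8. \<Sum>c<8. complex_of_real (antihole_state r * antihole_state c) *
      pauli_mat (antihole_string t) $$ (c, r)) \<in> {24, -24}"
  using less_7_cases[OF assms]
  by (elim disjE) (simp_all add: sum_lessThan_8 pauli_mat_index antihole_string_def prod_lessThan_3
      antihole_state_def)

lemma antihole_state_norm: "(\<Sum>r<8. (antihole_state r)\<^sup>2) = 44"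
  by (simp add: sum_lessThan_8 antihole_state_def)

lemma antihole_independent_card_le_2:
  assumes "J \<subseteq> {..<7}" and "\<forall>t\<in>J. \<forall>s\<in>J. t \<noteq> s \<longrightarrow> \<not> antihole_adj t s"
  shows "card J \<le> 2"
proof (rule ccontr)
  assume "\<not> card J \<le> 2"
  then obtain T where "T \<subseteq> J" "card T = 3"
    by (metis not_less_eq_eq numeral_3_eq_3 numeral_2_eq_2 obtain_subset_with_card_n)
  then obtain t1 t2 t3 where "{t1, t2, t3} \<subseteq> J" "t1 \<noteq> t2" "t2 \<noteq> t3" "t1 \<noteq> t3"
    by (auto simp: card_3_iff)
  then show False
    using antihole_no_independent_triple[of t1 t2 t3] assms by auto
qed

section \<open>Density matrices\<close>

lemma density_mat_carrier: "density_mat d \<rho> \<Longrightarrow> \<rho> \<in> carrier_mat d d"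
  by (simp add: density_mat_def)

lemma density_mat_hermitian:
  assumes "density_mat d \<rho>" "a < d" "b < d"
  shows "cnj (\<rho> $$ (b, a)) = \<rho> $$ (a, b)"
proof -
  have "conj_transpose \<rho> $$ (a, b) = \<rho> $$ (a, b)"
    using assms(1) by (simp add: density_mat_def)
  then show ?thesis
    using assms density_mat_carrier[OF assms(1)] by (simp add: conj_transpose_def)
qed

lemma quadratic_form_two_coords:
  fixes A :: "complex mat"
  assumes A: "A \<in> carrier_mat d d" and ab: "a < d" "b < d" "a \<noteq> b"
  shows "(A *\<^sub>v vec d (\<lambda>k. if k = a then 1 else if k = b then z else 0)) \<bullet>c
           vec d (\<lambda>k. if k = a then 1 else if k = b then z else 0)
       = A $$ (a, a) + A $$ (a, b) * z + (A $$ (b, a) + A $$ (b, b) * z) * cnj z"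
proof -
  have pick: "(\<Sum>k\<in>{0..<d}. f k * (if k = a then 1 else if k = b then y else 0)) = f a + f b * y"
    for f :: "nat \<Rightarrow> complex" and y
  proof -
    have "(\<Sum>k\<in>{0..<d}. f k * (if k = a then 1 else if k = b then y else 0)) =
        (\<Sum>k\<in>{0..<d}. (if k = a then f k else 0) + (if k = b then f k * y else 0))"
      using ab(3) by (intro sum.cong) auto
    then show ?thesis
      using ab by (simp add: sum.distrib)
  qed
  have "cnj (if k = a then 1 else if k = b then z else 0) = (if k = a then 1 else if k = b then cnj z else 0)"
    for k by simp
  then show ?thesis
    using A ab by (simp add: scalar_prod_def pick)
qed

lemma density_mat_diag_nonneg:
  assumes dm: "density_mat d \<rho>" and a: "a < d"
  shows "0 \<le> Re (\<rho> $$ (a, a))"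
proof -
  let ?e = "vec d (\<lambda>k. if k = a then 1 else 0) :: complex vec"
  have "(\<rho> *\<^sub>v ?e) \<bullet>c ?e = \<rho> $$ (a, a)"
    using density_mat_carrier[OF dm] a by (simp add: scalar_prod_def if_distrib[of cnj] if_distrib[of "(*) _"] cong: if_cong)
  moreover have "0 \<le> Re ((\<rho> *\<^sub>v ?e) \<bullet>c ?e)"
    using dm by (simp add: density_mat_def)
  ultimately show ?thesis by simp
qed

lemma density_mat_diag_le_1:
  assumes dm: "density_mat d \<rho>" and a: "a < d"
  shows "Re (\<rho> $$ (a, a)) \<le> 1"
proof -
  have "(\<Sum>k<d. Re (\<rho> $$ (k, k))) = 1"
    using dm density_mat_carrier[OF dm] by (simp add: density_mat_def mat_trace_def flip: Re_sum)
  moreover have "Re (\<rho> $$ (a, a)) \<le> (\<Sum>k<d. Re (\<rho> $$ (k, k)))"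
    using a density_mat_diag_nonneg[OF dm] by (intro member_le_sum) auto
  ultimately show ?thesis by simp
qed

lemma density_mat_diag_real:
  assumes "density_mat d \<rho>" "a < d"
  shows "\<rho> $$ (a, a) = complex_of_real (Re (\<rho> $$ (a, a)))"
  using density_mat_hermitian[OF assms assms(2)] by (simp add: complex_eq_iff)

lemma density_mat_offdiag_norm:
  assumes dm: "density_mat d \<rho>" and ab: "a < d" "b < d" "a \<noteq> b"
  shows "2 * cmod (\<rho> $$ (a, b)) \<le> Re (\<rho> $$ (a, a)) + Re (\<rho> $$ (b, b))"
proof (cases "\<rho> $$ (a, b) = 0")
  case True
  then show ?thesis using density_mat_diag_nonneg[OF dm] ab by (simp add: add_nonneg_nonneg)
next
  case False
  define r where "r = \<rho> $$ (a, b)"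
  define z where "z = - cnj r / complex_of_real (cmod r)"
  have r_cnj: "r * cnj r = complex_of_real ((cmod r)\<^sup>2)" "cnj r * r = complex_of_real ((cmod r)\<^sup>2)"
    by (simp_all add: complex_mult_cnj cmod_def mult.commute[of "cnj r"])
  have "cmod r \<noteq> 0" using False by (simp add: r_def)
  then have rz: "r * z = - complex_of_real (cmod r)" and zz: "z * cnj z = 1"
    by (simp_all add: z_def r_cnj power2_eq_square flip: mult.assoc)
  let ?x = "vec d (\<lambda>k. if k = a then 1 else if k = b then z else 0)"
  have "(\<rho> *\<^sub>v ?x) \<bullet>c ?x = \<rho> $$ (a, a) + r * z + cnj (r * z) + \<rho> $$ (b, b) * (z * cnj z)"
    using quadratic_form_two_coords[OF density_mat_carrier[OF dm] ab, of z]
      density_mat_hermitian[OF dm ab(2,1)]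
    by (simp add: r_def algebra_simps)
  moreover have "0 \<le> Re ((\<rho> *\<^sub>v ?x) \<bullet>c ?x)"
    using dm by (simp add: density_mat_def)
  ultimately have "0 \<le> Re (\<rho> $$ (a, a) + r * z + cnj (r * z) + \<rho> $$ (b, b) * (z * cnj z))"
    by simp
  then show ?thesis
    unfolding rz zz by (simp add: r_def)
qed

lemma density_mat_entry_norm_le_1:
  assumes dm: "density_mat d \<rho>" and ab: "a < d" "b < d"
  shows "cmod (\<rho> $$ (a, b)) \<le> 1"
proof (cases "a = b")
  case True
  then show ?thesis
    using density_mat_diag_real[OF dm ab(1)] density_mat_diag_nonneg[OF dm ab(1)]
      density_mat_diag_le_1[OF dm ab(1)]
    by (metis abs_of_nonneg norm_of_real)
next
  case False
  then show ?thesis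
    using density_mat_offdiag_norm[OF dm ab False] density_mat_diag_le_1[OF dm ab(1)]
      density_mat_diag_le_1[OF dm ab(2)]
    by linarith
qed

lemma mat_trace_mult:
  assumes "A \<in> carrier_mat d d" "B \<in> carrier_mat d d"
  shows "mat_trace (A * B) = (\<Sum>r<d. \<Sum>c<d. A $$ (r, c) * B $$ (c, r))"
  using assms by (simp add: mat_trace_def scalar_prod_def atLeast0LessThan)

lemma pauli_mat_entry_norm_le_1:
  assumes "r < 2 ^ length ps" "c < 2 ^ length ps"
  shows "cmod (pauli_mat ps $$ (r, c)) \<le> 1"
proof -
  have "cmod (pauli_entry p x y) \<le> 1" for p x y
    by (cases p) auto
  then have "(\<Prod>k<length ps. cmod (pauli_entry (ps ! k) (r div 2 ^ k mod 2) (c div 2 ^ k mod 2))) \<le> 1"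
    by (intro prod_le_1) auto
  then show ?thesis
    using assms by (simp add: pauli_mat_index order_trans[OF norm_prod_le])
qed

lemma abs_Re_trace_density_pauli_le:
  assumes dm: "density_mat (2 ^ length ps) \<rho>"
  shows "\<bar>Re (mat_trace (\<rho> * pauli_mat ps))\<bar> \<le> (2 ^ length ps)\<^sup>2"
proof -
  let ?d = "2 ^ length ps :: nat"
  have "\<bar>Re (mat_trace (\<rho> * pauli_mat ps))\<bar> \<le> cmod (\<Sum>r<?d. \<Sum>c<?d. \<rho> $$ (r, c) * pauli_mat ps $$ (c, r))"
    unfolding mat_trace_mult[OF density_mat_carrier[OF dm] pauli_mat_carrier(1)] by (rule abs_Re_le_cmod)
  also have "\<dots> \<le> (\<Sum>r<?d. \<Sum>c<?d. cmod (\<rho> $$ (r, c)) * cmod (pauli_mat ps $$ (c, r)))"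
    by (auto simp: norm_mult intro!: order_trans[OF norm_sum] sum_mono)
  also have "\<dots> \<le> (\<Sum>r<?d. \<Sum>c<?d. 1)"
    using density_mat_entry_norm_le_1[OF dm] pauli_mat_entry_norm_le_1
    by (intro sum_mono mult_le_one) auto
  finally show ?thesis
    by (simp add: power2_eq_square)
qed

lemma beta_real_ge:
  assumes len: "\<forall>i<n. length (S i) = m" and dm: "density_mat (2 ^ m) \<rho>"
  shows "(\<Sum>i<n. w i * (Re (mat_trace (\<rho> * pauli_mat (S i))))\<^sup>2) \<le> beta_real n m S w"
  unfolding beta_real_def
proof (rule cSup_upper)
  let ?f = "\<lambda>\<rho>. \<Sum>i<n. w i * (Re (mat_trace (\<rho> * pauli_mat (S i))))\<^sup>2"
  show "?f \<rho> \<in> ?f ` {\<rho>. density_mat (2 ^ m) \<rho>}"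
    using dm by simp
  have "?f \<sigma> \<le> (\<Sum>i<n. \<bar>w i\<bar> * ((2 ^ m)\<^sup>2)\<^sup>2)" if "density_mat (2 ^ m) \<sigma>" for \<sigma>
  proof (intro sum_mono)
    fix i assume "i \<in> {..<n}"
    then have "\<bar>Re (mat_trace (\<sigma> * pauli_mat (S i)))\<bar> \<le> (2 ^ m)\<^sup>2"
      using abs_Re_trace_density_pauli_le[of "S i" \<sigma>] that len by simp
    then have "(Re (mat_trace (\<sigma> * pauli_mat (S i))))\<^sup>2 \<le> ((2 ^ m)\<^sup>2)\<^sup>2"
      by (metis abs_ge_zero power2_abs power_mono)
    then show "w i * (Re (mat_trace (\<sigma> * pauli_mat (S i))))\<^sup>2 \<le> \<bar>w i\<bar> * ((2 ^ m)\<^sup>2)\<^sup>2"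
      by (metis abs_ge_self abs_ge_zero mult_mono zero_le_power2)
  qed
  then show "bdd_above (?f ` {\<rho>. density_mat (2 ^ m) \<rho>})"
    by (intro bdd_aboveI2) auto
qed

definition proj_mat :: "nat \<Rightarrow> (nat \<Rightarrow> real) \<Rightarrow> complex mat" where
  "proj_mat d u = mat d d (\<lambda>(r, c). complex_of_real (u r * u c / (\<Sum>k<d. (u k)\<^sup>2)))"

lemma density_mat_proj_mat:
  assumes "(\<Sum>k<d. (u k)\<^sup>2) \<noteq> 0"
  shows "density_mat d (proj_mat d u)"
  unfolding density_mat_def
proof (intro conjI ballI)
  define N where "N = (\<Sum>k<d. (u k)\<^sup>2)"
  have P: "proj_mat d u = mat d d (\<lambda>(r, c). complex_of_real (u r * u c / N))"
    by (simp add: proj_mat_def N_def)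
  show "proj_mat d u \<in> carrier_mat d d"
    by (simp add: P)
  show "conj_transpose (proj_mat d u) = proj_mat d u"
    by (rule eq_matI) (auto simp: conj_transpose_def P mult.commute)
  have "mat_trace (proj_mat d u) = complex_of_real ((\<Sum>r<d. (u r)\<^sup>2) / N)"
    by (simp add: mat_trace_def P power2_eq_square sum_divide_distrib)
  then show "mat_trace (proj_mat d u) = 1"
    using assms by (simp add: N_def)
  fix v :: "complex vec" assume v: "v \<in> carrier_vec d"
  define s where "s = (\<Sum>l<d. complex_of_real (u l) * v $ l)"
  have "(proj_mat d u *\<^sub>v v) $ k = complex_of_real (u k / N) * s" if "k < d" for k
    using that v by (simp add: P scalar_prod_def atLeast0LessThan s_def sum_distrib_left mult_ac)
  then have "(proj_mat d u *\<^sub>v v) \<bullet>c v = (\<Sum>k<d. complex_of_real (u k / N) * s * cnj (v $ k))"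
    using v by (simp add: scalar_prod_def atLeast0LessThan)
  also have "\<dots> = s * cnj s / complex_of_real N"
    by (simp add: s_def sum_distrib_left sum_distrib_right sum_divide_distrib mult_ac)
  also have "\<dots> = complex_of_real (((Re s)\<^sup>2 + (Im s)\<^sup>2) / N)"
    by (simp only: complex_mult_cnj of_real_divide)
  finally show "0 \<le> Re ((proj_mat d u *\<^sub>v v) \<bullet>c v)"
    by (simp add: N_def sum_nonneg)
qed

lemma trace_proj_mat_mult:
  assumes "A \<in> carrier_mat d d"
  shows "mat_trace (proj_mat d u * A)
    = (\<Sum>r<d. \<Sum>c<d. complex_of_real (u r * u c) * A $$ (c, r)) / complex_of_real (\<Sum>k<d. (u k)\<^sup>2)"
proof -
  define N where "N = (\<Sum>k<d. (u k)\<^sup>2)"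
  have P: "proj_mat d u = mat d d (\<lambda>(r, c). complex_of_real (u r * u c / N))"
    by (simp add: proj_mat_def N_def)
  have "mat_trace (proj_mat d u * A) = (\<Sum>r<d. \<Sum>c<d. proj_mat d u $$ (r, c) * A $$ (c, r))"
    by (rule mat_trace_mult[OF _ assms]) (simp add: P)
  then show ?thesis
    by (simp add: P sum_divide_distrib flip: N_def)
qed

section \<open>Graphs with an induced 7-antihole are not hbar-perfect\<close>

definition induced_antihole :: "nat set set \<Rightarrow> (nat \<Rightarrow> nat) \<Rightarrow> bool" where
  "induced_antihole E \<phi> \<longleftrightarrow> inj_on \<phi> {..<7} \<and>
     (\<forall>t<7. \<forall>s<7. t \<noteq> s \<longrightarrow> ({\<phi> t, \<phi> s} \<in> E \<longleftrightarrow> antihole_adj t s))"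

definition antihole_block :: "(nat \<Rightarrow> nat) \<Rightarrow> nat \<Rightarrow> pauli list" where
  "antihole_block \<phi> i =
     (if i \<in> \<phi> ` {..<7} then antihole_string (the_inv_into {..<7} \<phi> i) else [PI, PI, PI])"

(* Qubit q = a * n + b with a < b carries the edge {a, b} of E unless both ends lie in H.
   Its ends get the anticommuting pair Z, X, and an end in H always gets Z, so that the strings
   of the vertices of H are I or Z on all these qubits. *)
definition edge_qubit :: "nat \<Rightarrow> nat set set \<Rightarrow> nat set \<Rightarrow> nat \<Rightarrow> nat \<Rightarrow> pauli" where
  "edge_qubit n E H i q =
     (if q div n < q mod n \<and> i \<in> {q div n, q mod n} \<and> {q div n, q mod n} \<in> E
         \<and> \<not> (q div n \<in> H \<and> q mod n \<in> H)
      then (if i \<in> H \<or> (i = q div n \<and> q mod n \<notin> H) then PZ else PX)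
      else PI)"

definition antihole_embedding :: "nat \<Rightarrow> nat set set \<Rightarrow> (nat \<Rightarrow> nat) \<Rightarrow> nat \<Rightarrow> pauli list" where
  "antihole_embedding n E \<phi> i = antihole_block \<phi> i @ map (edge_qubit n E (\<phi> ` {..<7}) i) [0..<n * n]"

lemma the_inv_into_lessThan_7:
  "inj_on \<phi> {..<7} \<Longrightarrow> i \<in> \<phi> ` {..<7} \<Longrightarrow> the_inv_into {..<7} \<phi> i < 7"
  using the_inv_into_into[of \<phi> "{..<7}" i "{..<7}"] by auto

lemma length_antihole_block: "inj_on \<phi> {..<7} \<Longrightarrow> length (antihole_block \<phi> i) = 3"
  by (simp add: antihole_block_def length_antihole_string the_inv_into_lessThan_7)

lemma length_antihole_embedding: "inj_on \<phi> {..<7} \<Longrightarrow> length (antihole_embedding n E \<phi> i) = 3 + n * n"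
  by (simp add: antihole_embedding_def length_antihole_block)

lemma pauli_string_sign_antihole_block:
  assumes "inj_on \<phi> {..<7}"
  shows "pauli_string_sign (antihole_block \<phi> i) (antihole_block \<phi> j) =
    (if i \<in> \<phi> ` {..<7} \<and> j \<in> \<phi> ` {..<7} \<and>
        antihole_adj (the_inv_into {..<7} \<phi> i) (the_inv_into {..<7} \<phi> j) then -1 else 1)"
proof (cases "i \<in> \<phi> ` {..<7} \<and> j \<in> \<phi> ` {..<7}")
  case True
  then show ?thesis
    using assms by (simp add: antihole_block_def pauli_string_sign_antihole_string the_inv_into_lessThan_7)
next
  case False
  then show ?thesis
    using assms
    by (auto simp: antihole_block_def pauli_string_sign_def pauli_sign_def prod_lessThan_3
        the_inv_into_f_f length_antihole_string)
qed

lemma pair_index: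
  fixes a b n :: nat
  assumes "a < b" "b < n"
  shows "(a * n + b) div n = a" "(a * n + b) mod n = b" "a * n + b < n * n"
proof -
  show "(a * n + b) div n = a" "(a * n + b) mod n = b"
    using assms by simp_all
  have "a * n + b < (a + 1) * n"
    using assms by simp
  also have "\<dots> \<le> n * n"
    using assms by (intro mult_le_mono1) simp
  finally show "a * n + b < n * n" .
qed

lemma prod_edge_qubit_sign:
  assumes "i < n" "j < n"
  shows "(\<Prod>q<n * n. pauli_sign (edge_qubit n E H i q) (edge_qubit n E H j q)) =
    (if i \<noteq> j \<and> {i, j} \<in> E \<and> \<not> (i \<in> H \<and> j \<in> H) then -1 else 1)"
proof (cases "i = j")
  case True
  then show ?thesis by (simp add: pauli_sign_def)
next
  case False
  define a where "a = min i j"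
  define b where "b = max i j"
  have ab: "a < b" "b < n" "{a, b} = {i, j}"
    using False assms by (auto simp: a_def b_def)
  define q0 where "q0 = a * n + b"
  have q0: "q0 div n = a" "q0 mod n = b" "q0 < n * n"
    using pair_index[OF ab(1,2)] by (simp_all add: q0_def)
  have others: "pauli_sign (edge_qubit n E H i q) (edge_qubit n E H j q) = 1" if "q \<noteq> q0" for q
  proof (rule ccontr)
    assume "pauli_sign (edge_qubit n E H i q) (edge_qubit n E H j q) \<noteq> 1"
    then have "edge_qubit n E H i q \<noteq> PI" "edge_qubit n E H j q \<noteq> PI"
      by (auto simp: pauli_sign_def)
    then have "q div n < q mod n" "{q div n, q mod n} = {i, j}"
      using False by (auto simp: edge_qubit_def split: if_splits)
    then have "q div n = a" "q mod n = b"
      using ab by (auto simp: doubleton_eq_iff)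
    then show False
      using that by (metis div_mult_mod_eq mult.commute q0_def)
  qed
  have "(\<Prod>q<n * n. pauli_sign (edge_qubit n E H i q) (edge_qubit n E H j q))
      = pauli_sign (edge_qubit n E H i q0) (edge_qubit n E H j q0)"
    using q0(3) others by (subst prod.remove[of _ q0]) (auto intro!: prod.neutral)
  also have "\<dots> = (if {i, j} \<in> E \<and> \<not> (i \<in> H \<and> j \<in> H) then -1 else 1)"
    using False ab unfolding edge_qubit_def q0(1,2) a_def b_def
    by (cases "i < j") (auto simp: pauli_sign_def insert_commute min_def max_def)
  finally show ?thesis
    using False by simp
qed

lemma realization_antihole_embedding:
  assumes graph: "is_graph n E" and induced: "induced_antihole E \<phi>"
  shows "realization n E (3 + n * n) (antihole_embedding n E \<phi>)"
proof -
  let ?H = "\<phi> ` {..<7}" and ?\<psi> = "the_inv_into {..<7} \<phi>"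
  have inj: "inj_on \<phi> {..<7}"
    using induced by (simp add: induced_antihole_def)
  have inside: "{i, j} \<in> E \<longleftrightarrow> antihole_adj (?\<psi> i) (?\<psi> j)" if "i \<in> ?H" "j \<in> ?H" "i \<noteq> j" for i j
  proof -
    have "?\<psi> i < 7" "?\<psi> j < 7" "\<phi> (?\<psi> i) = i" "\<phi> (?\<psi> j) = j"
      using that inj by (auto simp: the_inv_into_lessThan_7 f_the_inv_into_f)
    then show ?thesis
      using induced that(3) unfolding induced_antihole_def by metis
  qed
  have sign: "pauli_string_sign (antihole_embedding n E \<phi> i) (antihole_embedding n E \<phi> j) =
      (if {i, j} \<in> E then -1 else 1)" if ij: "i < n" "j < n" for i j
  proof (cases "i = j")
    case True
    moreover have "{i} \<notin> E"
      using graph by (auto simp: is_graph_def all_pairs_def doubleton_eq_iff)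
    ultimately show ?thesis
      by (simp add: pauli_string_sign_def pauli_sign_def)
  next
    case False
    then show ?thesis
      using inside
      by (auto simp: antihole_embedding_def pauli_string_sign_append length_antihole_block[OF inj]
          pauli_string_sign_antihole_block[OF inj] pauli_string_sign_map prod_edge_qubit_sign[OF ij])
  qed
  show ?thesis
    unfolding realization_iff_pauli_string_sign
    using sign length_antihole_embedding[OF inj] by blast
qed

lemma sum_antihole_state_sq: "8 \<le> d \<Longrightarrow> (\<Sum>k<d. (antihole_state k)\<^sup>2) = 44"
  using antihole_state_norm
  by (subst sum.mono_neutral_right[of "{..<d}" "{..<8}"]) (auto simp: antihole_state_def)

lemma antihole_embedding_expectation:
  assumes inj: "inj_on \<phi> {..<7}" and i: "i \<in> \<phi> ` {..<7}"
  shows "(Re (mat_trace (proj_mat (2 ^ (3 + n * n)) antihole_state * pauli_mat (antihole_embedding n E \<phi> i))))\<^sup>2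
    = 36 / 121"
proof -
  let ?d = "2 ^ (3 + n * n) :: nat" and ?t = "the_inv_into {..<7} \<phi> i"
  let ?P = "pauli_mat (antihole_embedding n E \<phi> i)" and ?u = antihole_state
  have t: "?t < 7"
    using the_inv_into_lessThan_7[OF inj i] .
  have d: "8 \<le> ?d"
    using power_increasing[of 3 "3 + n * n" "2::nat"] by simp
  have vanish: "?u r = 0" if "r \<notin> {..<8}" for r
    using that by (simp add: antihole_state_def)
  have P: "?P $$ (c, r) = pauli_mat (antihole_string ?t) $$ (c, r)" if "c < 8" "r < 8" for c r
    using that i t
    by (auto simp: antihole_embedding_def antihole_block_def length_antihole_string edge_qubit_def
        intro!: pauli_mat_append_index)
  have "mat_trace (proj_mat ?d ?u * ?P)
      = (\<Sum>r<?d. \<Sum>c<?d. complex_of_real (?u r * ?u c) * ?P $$ (c, r)) / complex_of_real (\<Sum>k<?d. (?u k)\<^sup>2)"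
    by (rule trace_proj_mat_mult) (metis length_antihole_embedding[OF inj] pauli_mat_carrier(1))
  also have "(\<Sum>k<?d. (?u k)\<^sup>2) = 44"
    using sum_antihole_state_sq[OF d] .
  also have "(\<Sum>r<?d. \<Sum>c<?d. complex_of_real (?u r * ?u c) * ?P $$ (c, r))
      = (\<Sum>r<8. \<Sum>c<?d. complex_of_real (?u r * ?u c) * ?P $$ (c, r))"
    using d vanish by (intro sum.mono_neutral_right) auto
  also have "\<dots> = (\<Sum>r<8. \<Sum>c<8. complex_of_real (?u r * ?u c) * ?P $$ (c, r))"
    using d vanish by (intro sum.cong refl sum.mono_neutral_right) auto
  also have "\<dots> = (\<Sum>r<8. \<Sum>c<8. complex_of_real (?u r * ?u c) * pauli_mat (antihole_string ?t) $$ (c, r))"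
    by (simp add: P)
  finally have trace: "mat_trace (proj_mat ?d ?u * ?P)
      = (\<Sum>r<8. \<Sum>c<8. complex_of_real (?u r * ?u c) * pauli_mat (antihole_string ?t) $$ (c, r)) / 44"
    by simp
  show ?thesis
    using antihole_state_expectation[OF t] unfolding trace
    by (elim insertE) (simp_all add: power2_eq_square)
qed

lemma beta_antihole_embedding_ge:
  assumes inj: "inj_on \<phi> {..<7}" and H: "\<phi> ` {..<7} \<subseteq> {..<n}"
  shows "252 / 121 \<le> beta_real n (3 + n * n) (antihole_embedding n E \<phi>) (\<lambda>i. of_bool (i \<in> \<phi> ` {..<7}))"
proof -
  let ?d = "2 ^ (3 + n * n) :: nat" and ?H = "\<phi> ` {..<7}"
  let ?\<rho> = "proj_mat ?d antihole_state"
  have "8 \<le> ?d"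
    using power_increasing[of 3 "3 + n * n" "2::nat"] by simp
  then have "density_mat ?d ?\<rho>"
    by (simp add: density_mat_proj_mat sum_antihole_state_sq)
  then have "(\<Sum>i<n. of_bool (i \<in> ?H) * (Re (mat_trace (?\<rho> * pauli_mat (antihole_embedding n E \<phi> i))))\<^sup>2)
      \<le> beta_real n (3 + n * n) (antihole_embedding n E \<phi>) (\<lambda>i. of_bool (i \<in> ?H))"
    by (intro beta_real_ge) (simp add: length_antihole_embedding[OF inj])
  also have "(\<Sum>i<n. of_bool (i \<in> ?H) * (Re (mat_trace (?\<rho> * pauli_mat (antihole_embedding n E \<phi> i))))\<^sup>2)
      = (\<Sum>i<n. if i \<in> ?H then 36 / 121 else 0)"
    by (intro sum.cong refl) (simp add: antihole_embedding_expectation[OF inj])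
  also have "\<dots> = (\<Sum>i\<in>?H. 36 / 121)"
    using H by (simp add: sum.If_cases Int_absorb1)
  also have "\<dots> = 252 / 121"
    using card_image[OF inj] by simp
  finally show ?thesis .
qed

lemma alpha_induced_antihole_le:
  assumes induced: "induced_antihole E \<phi>"
  shows "alpha n E (\<lambda>i. of_bool (i \<in> \<phi> ` {..<7})) \<le> 2"
proof -
  have inj: "inj_on \<phi> {..<7}"
    using induced by (simp add: induced_antihole_def)
  have "(\<Sum>i\<in>I. of_bool (i \<in> \<phi> ` {..<7})) \<le> (2::real)" if I: "independent n E I" for I
  proof -
    let ?J = "{t \<in> {..<7}. \<phi> t \<in> I}"
    have "finite I"
      using I finite_subset by (auto simp: independent_def)
    then have "(\<Sum>i\<in>I. of_bool (i \<in> \<phi> ` {..<7})) = real (card (I \<inter> \<phi> ` {..<7}))"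
      by (simp add: of_bool_def sum.If_cases)
    also have "I \<inter> \<phi> ` {..<7} = \<phi> ` ?J"
      by auto
    also have "card (\<phi> ` ?J) = card ?J"
      using inj by (intro card_image) (auto intro: inj_on_subset)
    also have "card ?J \<le> 2"
      using I induced unfolding independent_def induced_antihole_def
      by (intro antihole_independent_card_le_2) blast+
    finally show ?thesis by simp
  qed
  moreover have "finite {I. independent n E I}"
    by (rule finite_subset[of _ "Pow {..<n}"]) (auto simp: independent_def)
  moreover have "independent n E {}"
    by (simp add: independent_def)
  ultimately show ?thesis
    unfolding alpha_def by (subst Max_le_iff) auto
qed

lemma not_hbar_perfect_if_induced_antihole:
  assumes graph: "is_graph n E" and induced: "induced_antihole E \<phi>" and H: "\<phi> ` {..<7} \<subseteq> {..<n}"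
  shows "\<not> hbar_perfect n E"
proof
  assume "hbar_perfect n E"
  then have "beta_real n (3 + n * n) (antihole_embedding n E \<phi>) (\<lambda>i. of_bool (i \<in> \<phi> ` {..<7}))
      = alpha n E (\<lambda>i. of_bool (i \<in> \<phi> ` {..<7}))"
    using realization_antihole_embedding[OF graph induced] unfolding hbar_perfect_def by simp
  moreover have "inj_on \<phi> {..<7}"
    using induced by (simp add: induced_antihole_def)
  ultimately show False
    using beta_antihole_embedding_ge[OF _ H, of E] alpha_induced_antihole_le[OF induced, of n] by simp
qed

section \<open>Counting graphs avoiding the antihole on many lines\<close>

definition pairs_on :: "'a set \<Rightarrow> 'a set set" where
  "pairs_on V = {{x, y} | x y. x \<in> V \<and> y \<in> V \<and> x \<noteq> y}"

definition antihole_edges :: "(nat \<Rightarrow> nat) \<Rightarrow> nat set set" where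
  "antihole_edges \<phi> = {{\<phi> t, \<phi> s} | t s. t < 7 \<and> s < 7 \<and> antihole_adj t s}"

lemma pairs_on_eq: "pairs_on V = {e. e \<subseteq> V \<and> card e = 2}"
  by (auto simp: pairs_on_def card_2_iff)

lemma all_pairs_eq_pairs_on: "all_pairs n = pairs_on {..<n}"
  by (auto simp: all_pairs_def pairs_on_def)

lemma card_pairs_on: "finite V \<Longrightarrow> card (pairs_on V) = card V choose 2"
  by (simp add: pairs_on_eq n_subsets)

lemma pairs_on_disjoint:
  assumes "\<forall>x\<in>V \<inter> W. \<forall>y\<in>V \<inter> W. x = y"
  shows "pairs_on V \<inter> pairs_on W = {}"
  using assms by (fastforce simp: pairs_on_def doubleton_eq_iff)

lemma induced_antihole_if_pattern:
  assumes inj: "inj_on \<phi> {..<7}" and pattern: "E \<inter> pairs_on (\<phi> ` {..<7}) = antihole_edges \<phi>"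
  shows "induced_antihole E \<phi>"
  unfolding induced_antihole_def
proof (intro conjI inj allI impI)
  fix t s :: nat assume ts: "t < 7" "s < 7" "t \<noteq> s"
  have "{\<phi> t, \<phi> s} \<in> pairs_on (\<phi> ` {..<7})"
    using ts inj by (auto simp: pairs_on_def inj_on_def)
  then have "{\<phi> t, \<phi> s} \<in> E \<longleftrightarrow> {\<phi> t, \<phi> s} \<in> antihole_edges \<phi>"
    using pattern by blast
  also have "\<dots> \<longleftrightarrow> antihole_adj t s"
  proof
    assume "{\<phi> t, \<phi> s} \<in> antihole_edges \<phi>"
    then obtain t' s' where ts': "t' < 7" "s' < 7" "antihole_adj t' s'" "{\<phi> t', \<phi> s'} = {\<phi> t, \<phi> s}"
      by (auto simp: antihole_edges_def)
    then have "(t' = t \<and> s' = s) \<or> (t' = s \<and> s' = t)"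
      using ts inj by (auto simp: doubleton_eq_iff inj_on_def)
    then show "antihole_adj t s"
      using ts'(3) antihole_adj_sym[OF ts(1,2)] by blast
  qed (use ts in \<open>auto simp: antihole_edges_def\<close>)
  finally show "{\<phi> t, \<phi> s} \<in> E \<longleftrightarrow> antihole_adj t s" .
qed

lemma antihole_edges_subset_pairs_on:
  assumes "inj_on \<phi> {..<7}"
  shows "antihole_edges \<phi> \<subseteq> pairs_on (\<phi> ` {..<7})"
proof -
  have "\<not> antihole_adj t t" for t
    by (simp add: antihole_adj_def)
  then show ?thesis
    using assms unfolding antihole_edges_def pairs_on_def inj_on_def by blast
qed

lemma hbar_perfect_avoids_antihole_pattern:
  assumes "is_graph n E" "hbar_perfect n E" "inj_on \<phi> {..<7}" "\<phi> ` {..<7} \<subseteq> {..<n}"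
  shows "E \<inter> pairs_on (\<phi> ` {..<7}) \<noteq> antihole_edges \<phi>"
  using assms not_hbar_perfect_if_induced_antihole induced_antihole_if_pattern by blast

lemma finite_all_pairs: "finite (all_pairs n)"
  by (rule finite_subset[of _ "Pow {..<n}"]) (auto simp: all_pairs_def)

lemma card_le_pow_mult_card_pattern:
  assumes S: "finite S" and A: "finite A" "F \<subseteq> A" and reset: "\<forall>E\<in>S. (E - A) \<union> F \<in> S"
  shows "card S \<le> 2 ^ card A * card {E \<in> S. E \<inter> A = F}"
proof -
  let ?C = "{E \<in> S. E \<inter> A = F}"
  have "inj_on (\<lambda>E. (E \<inter> A, (E - A) \<union> F)) S"
  proof (rule inj_onI)
    fix E E' assume "(E \<inter> A, (E - A) \<union> F) = (E' \<inter> A, (E' - A) \<union> F)"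
    then have "E \<inter> A = E' \<inter> A" "(E - A) \<union> F - A = (E' - A) \<union> F - A"
      by auto
    then show "E = E'"
      using A(2) by blast
  qed
  moreover have "(\<lambda>E. (E \<inter> A, (E - A) \<union> F)) ` S \<subseteq> Pow A \<times> ?C"
    using reset A(2) by auto
  moreover have "finite ?C"
    using S by simp
  ultimately have "card S \<le> card (Pow A \<times> ?C)"
    using A(1) by (intro card_inj_on_le) auto
  also have "\<dots> = 2 ^ card A * card ?C"
    using A(1) by (simp add: card_cartesian_product card_Pow)
  finally show ?thesis .
qed

lemma card_diff_le_fraction:
  assumes "finite S" "C \<subseteq> S" "card S \<le> 2 ^ k * card C" "k \<le> a"
  shows "real (card (S - C)) \<le> real (card S) * (1 - 1 / 2 ^ a)"
proof -
  have "real (card S) \<le> 2 ^ k * real (card C)"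
    using of_nat_mono[OF assms(3)] by simp
  then have "real (card S) / 2 ^ k \<le> real (card C)"
    by (simp add: divide_le_eq mult.commute)
  moreover have "real (card (S - C)) = real (card S) - real (card C)"
    using assms(1,2) by (simp add: card_Diff_subset finite_subset card_mono of_nat_diff)
  ultimately have "real (card (S - C)) \<le> real (card S) * (1 - 1 / 2 ^ k)"
    by (simp add: algebra_simps)
  also have "\<dots> \<le> real (card S) * (1 - 1 / 2 ^ a)"
    using assms(4) by (intro mult_left_mono diff_left_mono divide_left_mono power_increasing) auto
  finally show ?thesis .
qed

lemma card_pattern_avoiding_le:
  assumes U: "finite U" and L: "finite L"
    and A: "\<forall>l\<in>L. F l \<subseteq> A l \<and> A l \<subseteq> U \<and> card (A l) \<le> a" and disj: "disjoint_family_on A L"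
  shows "real (card {E. E \<subseteq> U \<and> (\<forall>l\<in>L. E \<inter> A l \<noteq> F l)}) \<le> (1 - 1 / 2 ^ a) ^ card L * 2 ^ card U"
  using L A disj
proof (induction L rule: finite_induct)
  case empty
  then show ?case
    using U by (simp add: card_Pow flip: Pow_def)
next
  case (insert l L)
  let ?S = "{E. E \<subseteq> U \<and> (\<forall>l\<in>L. E \<inter> A l \<noteq> F l)}"
  let ?C = "{E \<in> ?S. E \<inter> A l = F l}"
  have IH: "real (card ?S) \<le> (1 - 1 / 2 ^ a) ^ card L * 2 ^ card U"
    using insert.prems by (intro insert.IH) (auto simp: disjoint_family_on_def)
  have finS: "finite ?S"
    using U by (simp add: finite_subset[of _ "Pow U"] subset_eq)
  have Al: "F l \<subseteq> A l" "A l \<subseteq> U" "card (A l) \<le> a"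
    using insert.prems(1) by auto
  have "((E - A l) \<union> F l) \<inter> A l' = E \<inter> A l'" if "l' \<in> L" for E l'
  proof -
    have "A l \<inter> A l' = {}"
      using insert.prems(2) insert.hyps(2) that unfolding disjoint_family_on_def by (metis insertCI)
    then show ?thesis
      using Al(1) by blast
  qed
  then have "\<forall>E\<in>?S. (E - A l) \<union> F l \<in> ?S"
    using Al by auto
  then have "card ?S \<le> 2 ^ card (A l) * card ?C"
    using finS U Al by (intro card_le_pow_mult_card_pattern) (auto intro: finite_subset)
  then have "real (card (?S - ?C)) \<le> real (card ?S) * (1 - 1 / 2 ^ a)"
    using finS Al(3) by (intro card_diff_le_fraction) auto
  also have "\<dots> \<le> (1 - 1 / 2 ^ a) ^ card L * 2 ^ card U * (1 - 1 / 2 ^ a)"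
    using IH by (rule mult_right_mono) simp
  also have "?S - ?C = {E. E \<subseteq> U \<and> (\<forall>l'\<in>insert l L. E \<inter> A l' \<noteq> F l')}"
    by auto
  finally show ?case
    using insert.hyps by (simp add: mult_ac)
qed

(* Vertex 7 x + t stands for the point (x, t) of a grid, and the line (a, b) is the set of
   points (a + b t, t) with t < 7. *)
definition grid_line :: "nat \<times> nat \<Rightarrow> nat \<Rightarrow> nat" where
  "grid_line ab t = 7 * (fst ab + snd ab * t) + t"

lemma grid_line_mod_7: "t < 7 \<Longrightarrow> grid_line ab t mod 7 = t"
  unfolding grid_line_def by presburger

lemma inj_on_grid_line: "inj_on (grid_line ab) {..<7}"
  by (rule inj_onI) (metis grid_line_mod_7 lessThan_iff)

lemma grid_line_less:
  assumes "ab \<in> {..<p} \<times> {..<p}" "t < 7"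
  shows "grid_line ab t < 49 * p"
proof -
  obtain a b where ab: "ab = (a, b)" "a < p" "b < p"
    using assms(1) by auto
  have "b * t \<le> (p - 1) * 6"
    using ab assms(2) by (intro mult_le_mono) auto
  then have "a + b * t + 1 \<le> 7 * p"
    using ab by (simp add: algebra_simps)
  then show ?thesis
    using ab assms(2) by (simp add: grid_line_def)
qed

lemma grid_line_eq_if_two_points:
  assumes "t \<noteq> s" "grid_line ab t = grid_line ab' t" "grid_line ab s = grid_line ab' s"
  shows "ab = ab'"
proof -
  obtain a b a' b' where ab: "ab = (a, b)" "ab' = (a', b')"
    by fastforce
  have t: "int a + int b * int t = int a' + int b' * int t"
    and s: "int a + int b * int s = int a' + int b' * int s"
    using assms(2,3) by (simp_all add: ab grid_line_def flip: of_nat_mult of_nat_add)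
  then have "(int b - int b') * (int t - int s) = 0"
    by (simp add: algebra_simps)
  then have "b = b'" "a = a'"
    using assms(1) t by auto
  then show ?thesis
    by (simp add: ab)
qed

lemma grid_lines_meet_at_most_once:
  assumes "ab \<noteq> ab'"
  shows "\<forall>x\<in>grid_line ab ` {..<7} \<inter> grid_line ab' ` {..<7}. \<forall>y\<in>grid_line ab ` {..<7} \<inter> grid_line ab' ` {..<7}. x = y"
proof (intro ballI)
  fix x y assume "x \<in> grid_line ab ` {..<7} \<inter> grid_line ab' ` {..<7}" "y \<in> grid_line ab ` {..<7} \<inter> grid_line ab' ` {..<7}"
  then obtain t t' s s' where "t < 7" "t' < 7" "s < 7" "s' < 7"
    and x: "x = grid_line ab t" "x = grid_line ab' t'" and y: "y = grid_line ab s" "y = grid_line ab' s'"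
    by blast
  then have "t' = t" "s' = s"
    by (metis grid_line_mod_7)+
  then show "x = y"
    using grid_line_eq_if_two_points[of t s ab ab'] x y assms by metis
qed

lemma card_pairs_on_grid_line: "card (pairs_on (grid_line ab ` {..<7})) = 21"
  using inj_on_grid_line[of ab] by (simp add: card_pairs_on card_image choose_two)

lemma card_hbar_perfect_le:
  assumes n: "49 * p \<le> n"
  shows "real (card {E. is_graph n E \<and> hbar_perfect n E}) \<le> (1 - 1 / 2 ^ 21) ^ (p * p) * 2 ^ (n choose 2)"
proof -
  let ?L = "{..<p} \<times> {..<p}"
  let ?A = "\<lambda>ab. pairs_on (grid_line ab ` {..<7})" and ?F = "\<lambda>ab. antihole_edges (grid_line ab)"
  let ?avoiding = "{E. E \<subseteq> all_pairs n \<and> (\<forall>ab\<in>?L. E \<inter> ?A ab \<noteq> ?F ab)}"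
  have line: "grid_line ab ` {..<7} \<subseteq> {..<n}" if "ab \<in> ?L" for ab
    using grid_line_less[OF that] n by fastforce
  have "{E. is_graph n E \<and> hbar_perfect n E} \<subseteq> ?avoiding"
    using hbar_perfect_avoids_antihole_pattern[OF _ _ inj_on_grid_line line]
    by (auto simp: is_graph_def)
  then have "card {E. is_graph n E \<and> hbar_perfect n E} \<le> card ?avoiding"
    using finite_all_pairs by (intro card_mono) (auto intro: finite_subset[of _ "Pow (all_pairs n)"])
  moreover have "real (card ?avoiding) \<le> (1 - 1 / 2 ^ 21) ^ card ?L * 2 ^ card (all_pairs n)"
  proof (rule card_pattern_avoiding_le[OF finite_all_pairs])
    show "\<forall>ab\<in>?L. ?F ab \<subseteq> ?A ab \<and> ?A ab \<subseteq> all_pairs n \<and> card (?A ab) \<le> 21"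
    proof (intro ballI conjI)
      fix ab assume "ab \<in> ?L"
      then show "?A ab \<subseteq> all_pairs n"
        using line unfolding all_pairs_eq_pairs_on pairs_on_def by blast
    qed (simp_all add: antihole_edges_subset_pairs_on inj_on_grid_line card_pairs_on_grid_line)
    show "disjoint_family_on ?A ?L"
      unfolding disjoint_family_on_def by (intro ballI impI pairs_on_disjoint grid_lines_meet_at_most_once)
  qed simp
  ultimately show ?thesis
    by (simp add: all_pairs_eq_pairs_on card_pairs_on)
qed

lemma real_choose_two: "real (n choose 2) = real n * (real n - 1) / 2"
proof -
  have "even (n * (n - 1))"
    by (cases "even n") auto
  then show ?thesis
    by (cases n) (simp_all add: choose_two real_of_nat_div of_nat_diff algebra_simps)
qed

lemma choose_two_le_div_49_sq:
  assumes "49 \<le> n"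
  shows "real (n choose 2) \<le> 4802 * real (n div 49 * (n div 49))"
proof -
  have "n \<le> 98 * (n div 49)"
    using assms by presburger
  then have "real n ^ 2 \<le> (98 * real (n div 49)) ^ 2"
    by (intro power_mono) simp_all
  then show ?thesis
    by (simp add: real_choose_two power2_eq_square algebra_simps)
qed

lemma power_eq_two_powr_log: "0 < x \<Longrightarrow> x ^ k = 2 powr (log 2 x * real k)"
  by (simp add: powr_powr[symmetric] powr_realpow)

theorem theorem4:
  shows "\<exists>c::real. c < 1 \<and> (\<exists>N::nat. \<forall>n\<ge>N.
           real (card {E. is_graph n E \<and> hbar_perfect n E})
             \<le> 2 powr (c * real n * (real n - 1) / 2))"
proof (intro exI conjI allI impI)
  define \<delta> :: real where "\<delta> = - log 2 (1 - 1 / 2 ^ 21)"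
  have \<delta>: "0 < \<delta>"
    by (simp add: \<delta>_def)
  show "1 - \<delta> / 4802 < 1"
    using \<delta> by simp
  fix n :: nat assume n: "n \<ge> 49"
  define p where "p = n div 49"
  have "real (card {E. is_graph n E \<and> hbar_perfect n E}) \<le> (1 - 1 / 2 ^ 21) ^ (p * p) * 2 ^ (n choose 2)"
    by (rule card_hbar_perfect_le) (simp add: p_def)
  also have "\<dots> = 2 powr (real (n choose 2) - \<delta> * real (p * p))"
    by (subst power_eq_two_powr_log[of "1 - 1 / 2 ^ 21"]) (simp_all add: \<delta>_def powr_add powr_realpow)
  also have "\<dots> \<le> 2 powr ((1 - \<delta> / 4802) * real (n choose 2))"
    using mult_left_mono[OF choose_two_le_div_49_sq[OF n], of \<delta>] \<delta>
    by (intro powr_mono) (simp_all add: p_def algebra_simps)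
  also have "\<dots> = 2 powr ((1 - \<delta> / 4802) * real n * (real n - 1) / 2)"
    by (simp add: real_choose_two mult.assoc)
  finally show "real (card {E. is_graph n E \<and> hbar_perfect n E}) \<le> 2 powr ((1 - \<delta> / 4802) * real n * (real n - 1) / 2)" .
qed

end
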